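(* Let $k\ge 0$ and let $P_{4k+3}$ be the path with vertices labeled $1,2,\dots,4k+3$ consecutively. Then $\tau(P_{4k+3})=k+2$, and for each vertex $v$, writing $v=4q+r$ with $0\le r<4$, $$TDV(v)=\begin{cases}0 & \text{if } v\equiv 0 \pmod 4,\\ q+1 & \text{if } v\equiv 1 \pmod 4,\\ k+2 & \text{if } v\equiv 2 \pmod 4,\\ k+1-q & \text{if } v\equiv 3 \pmod 4.\end{cases}$$
   Context: A set $D \subseteq V(G)$ is a total dominating set of a graph $G$ if every vertex of $G$ has a neighbor in $D$. $\gamma_t(G)$ is the minimum cardinality of a total dominating set; a minimum one is a $\gamma_t(G)$-set. $\tau(G)$ is the number of $\gamma_t(G)$-sets and $TDV(v)$ is the number of $\gamma_t(P_{4k+3})$-sets containing $v$. *)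

theory Defs
  imports Main
begin

text \<open>A finite simple graph given by a vertex set V and a symmetric irreflexive
adjacency relation E (only its restriction to V matters).\<close>

definition total_dominating_set :: "'a set \<Rightarrow> ('a \<Rightarrow> 'a \<Rightarrow> bool) \<Rightarrow> 'a set \<Rightarrow> bool" where
  "total_dominating_set V E D \<longleftrightarrow> D \<subseteq> V \<and> (\<forall>v\<in>V. \<exists>u\<in>D. E v u)"

definition gamma_t :: "'a set \<Rightarrow> ('a \<Rightarrow> 'a \<Rightarrow> bool) \<Rightarrow> nat" where
  "gamma_t V E = Min (card ` {D. total_dominating_set V E D})"

definition gamma_t_sets :: "'a set \<Rightarrow> ('a \<Rightarrow> 'a \<Rightarrow> bool) \<Rightarrow> 'a set set" where
  "gamma_t_sets V E = {D. total_dominating_set V E D \<and> card D = gamma_t V E}"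

definition tau :: "'a set \<Rightarrow> ('a \<Rightarrow> 'a \<Rightarrow> bool) \<Rightarrow> nat" where
  "tau V E = card (gamma_t_sets V E)"

definition TDV :: "'a set \<Rightarrow> ('a \<Rightarrow> 'a \<Rightarrow> bool) \<Rightarrow> 'a \<Rightarrow> nat" where
  "TDV V E v = card {D \<in> gamma_t_sets V E. v \<in> D}"

definition path_V :: "nat \<Rightarrow> nat set" where
  "path_V n = {1..n}"

definition path_E :: "nat \<Rightarrow> nat \<Rightarrow> bool" where
  "path_E u v \<longleftrightarrow> u = v + 1 \<or> v = u + 1"

end

theory Submission
  imports Defs
begin

text \<open>The vertices 4q+2 and 4q+3 (q \<le> k) of P_{4k+3} have pairwise disjoint open
neighbourhoods, so a total dominating set needs a separate vertex for each of these 2k+2 vertices;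
hence \<open>\<gamma>\<^sub>t = 2k+2\<close>, and a minimum total dominating set meets each of these neighbourhoods exactly
once. Walking along the path, this forces every vertex \<open>\<equiv> 2\<close> into the set, every vertex
\<open>\<equiv> 0\<close> out of it, and exactly one of 4q+1, 4q+3 into it for every q, where the blocks using
4q+3 form an initial segment q < j. The k+2 choices j \<le> k+1 are the \<open>\<gamma>\<^sub>t\<close>-sets, and TDV(v)
counts the j whose set contains v.\<close>

definition open_packing :: "('a \<Rightarrow> 'a \<Rightarrow> bool) \<Rightarrow> 'a set \<Rightarrow> bool" where
  "open_packing E W \<longleftrightarrow> (\<forall>u. \<forall>w\<in>W. \<forall>w'\<in>W. E w u \<longrightarrow> E w' u \<longrightarrow> w = w')"

lemma open_packing_dominator_choice:
  assumes "open_packing E W" "\<forall>w\<in>W. \<exists>u\<in>D. E w u"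
  obtains f where "inj_on f W" "f ` W \<subseteq> D" "\<forall>w\<in>W. E w (f w)"
proof -
  define f where "f w = (SOME u. u \<in> D \<and> E w u)" for w
  have f: "f w \<in> D \<and> E w (f w)" if "w \<in> W" for w
    unfolding f_def using assms(2) that by (metis (mono_tags, lifting) someI_ex)
  have "inj_on f W" using assms(1) f unfolding open_packing_def inj_on_def by metis
  with f show thesis using that by blast
qed

lemma card_le_if_open_packing:
  assumes "finite D" "open_packing E W" "\<forall>w\<in>W. \<exists>u\<in>D. E w u"
  shows "card W \<le> card D"
  using assms by (metis open_packing_dominator_choice card_inj_on_le)

lemma unique_neighbour_if_open_packing_card_eq:
  assumes "finite D" "open_packing E W" "\<forall>w\<in>W. \<exists>u\<in>D. E w u" "card D = card W"
    and "w \<in> W" "u \<in> D" "u' \<in> D" "E w u" "E w u'"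
  shows "u = u'"
proof -
  obtain f where f: "inj_on f W" "f ` W \<subseteq> D" "\<forall>w\<in>W. E w (f w)"
    using open_packing_dominator_choice assms(2,3) by blast
  have "f ` W = D"
    using card_subset_eq[OF assms(1) f(2)] card_image[OF f(1)] assms(4) by simp
  then have "x = f w" if "x \<in> D" "E w x" for x
    using that f(3) assms(2,5) unfolding open_packing_def by blast
  with assms(6-9) show ?thesis by metis
qed

lemma gamma_t_sets_eqI:
  assumes "finite V" "total_dominating_set V E D\<^sub>0" "card D\<^sub>0 = n"
    and "\<And>D. total_dominating_set V E D \<Longrightarrow> n \<le> card D"
  shows "gamma_t_sets V E = {D. total_dominating_set V E D \<and> card D = n}"
proof -
  have "finite {D. total_dominating_set V E D}"
    using assms(1) by (rule finite_subset[rotated, OF finite_Pow_iff[THEN iffD2]])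
      (auto simp: total_dominating_set_def)
  then have "gamma_t V E = n"
    unfolding gamma_t_def using assms(2-4) by (intro Min_eqI) auto
  then show ?thesis unfolding gamma_t_sets_def by simp
qed

lemma downward_closed_nat_initial_segment:
  fixes P :: "nat \<Rightarrow> bool"
  assumes down: "\<And>q. P (Suc q) \<Longrightarrow> P q" and "\<not> P m"
  obtains j where "j \<le> m" "\<And>q. P q \<longleftrightarrow> q < j"
proof
  define j where "j = (LEAST q. \<not> P q)"
  show "j \<le> m" unfolding j_def using assms(2) by (rule Least_le)
  have "P p" if "P q" "p \<le> q" for p q
    using that by (induction q) (auto simp: le_Suc_eq intro: down)
  moreover have "\<not> P j" unfolding j_def using assms(2) by (rule LeastI)
  ultimately show "P q \<longleftrightarrow> q < j" for q
    using not_less_Least[of q "\<lambda>q. \<not> P q"] unfolding j_def by (metis not_le)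
qed

lemma mod4_cases:
  fixes v :: nat
  obtains q where "v = 4*q" | q where "v = 4*q+1" | q where "v = 4*q+2" | q where "v = 4*q+3"
proof -
  have "v mod 4 = 0 \<or> v mod 4 = 1 \<or> v mod 4 = 2 \<or> v mod 4 = 3" by arith
  then show ?thesis using that[of "v div 4"] by (metis div_mult_mod_eq add.commute add_0 mult.commute)
qed

lemma path_tds_neighbour:
  assumes "total_dominating_set (path_V n) path_E D" "1 \<le> v" "v \<le> n"
  shows "\<exists>u\<in>D. v = u + 1 \<or> u = v + 1"
  using assms unfolding total_dominating_set_def path_E_def path_V_def by auto

definition path_packing :: "nat \<Rightarrow> nat set" where
  "path_packing k = {v. v \<le> 4*k+3 \<and> (v mod 4 = 2 \<or> v mod 4 = 3)}"

lemma open_packing_path_packing: "open_packing path_E (path_packing k)"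
  unfolding open_packing_def path_packing_def path_E_def by auto presburger+

lemma card_path_packing: "card (path_packing k) = 2*k+2"
proof (induction k)
  case 0
  have "path_packing 0 = {2, 3}" unfolding path_packing_def by auto
  then show ?case by simp
next
  case (Suc k)
  have "path_packing (Suc k) = insert (4*k+6) (insert (4*k+7) (path_packing k))"
    unfolding path_packing_def by auto presburger+
  moreover have "finite (path_packing k)" unfolding path_packing_def by simp
  ultimately show ?case using Suc by (simp add: path_packing_def)
qed

lemma path_packing_subset: "path_packing k \<subseteq> path_V (4*k+3)"
  unfolding path_packing_def path_V_def by (auto intro: gr0I)

lemma card_path_tds_ge:
  assumes "total_dominating_set (path_V (4*k+3)) path_E D"
  shows "2*k+2 \<le> card D"
proof -
  have "finite D"
    using assms finite_subset unfolding total_dominating_set_def path_V_def by blast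
  moreover have "\<forall>w\<in>path_packing k. \<exists>u\<in>D. path_E w u"
    using assms path_packing_subset unfolding total_dominating_set_def by blast
  ultimately show ?thesis
    using card_le_if_open_packing[OF _ open_packing_path_packing] by (simp add: card_path_packing)
qed

definition path_min_tds :: "nat \<Rightarrow> nat \<Rightarrow> nat set" where
  "path_min_tds k j = {v \<in> path_V (4*k+3).
     v mod 4 = 2 \<or> (v mod 4 = 3 \<and> v div 4 < j) \<or> (v mod 4 = 1 \<and> j \<le> v div 4)}"

lemma mem_path_min_tds:
  "4*q \<notin> path_min_tds k j"
  "4*q+1 \<in> path_min_tds k j \<longleftrightarrow> j \<le> q \<and> q \<le> k"
  "4*q+2 \<in> path_min_tds k j \<longleftrightarrow> q \<le> k"
  "4*q+3 \<in> path_min_tds k j \<longleftrightarrow> q < j \<and> q \<le> k"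
  unfolding path_min_tds_def path_V_def mem_Collect_eq atLeastAtMost_iff
  by (simp_all add: mod_Suc div_Suc) arith+

lemma path_min_tds_total_dominating:
  "total_dominating_set (path_V (4*k+3)) path_E (path_min_tds k j)"
  unfolding total_dominating_set_def
proof (intro conjI ballI)
  show "path_min_tds k j \<subseteq> path_V (4*k+3)" unfolding path_min_tds_def by blast
  fix v assume "v \<in> path_V (4*k+3)"
  then have v: "1 \<le> v" "v \<le> 4*k+3" unfolding path_V_def by auto
  have "v - 1 \<in> path_min_tds k j \<or> v + 1 \<in> path_min_tds k j"
  proof (cases v rule: mod4_cases)
    case (1 q)
    then have e: "v - 1 = 4*(q-1)+3" "v + 1 = 4*q+1" and "1 \<le> q" "q \<le> k" using v by auto
    then show ?thesis unfolding e mem_path_min_tds by linarith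
  next
    case (2 q)
    then have e: "v + 1 = 4*q+2" and "q \<le> k" using v by auto
    then show ?thesis unfolding e mem_path_min_tds by blast
  next
    case (3 q)
    then have e: "v - 1 = 4*q+1" "v + 1 = 4*q+3" and "q \<le> k" using v by auto
    then show ?thesis unfolding e mem_path_min_tds by linarith
  next
    case (4 q)
    then have e: "v - 1 = 4*q+2" and "q \<le> k" using v by auto
    then show ?thesis unfolding e mem_path_min_tds by blast
  qed
  moreover have "path_E v (v - 1)" "path_E v (v + 1)" unfolding path_E_def using v by auto
  ultimately show "\<exists>u\<in>path_min_tds k j. path_E v u" by blast
qed

lemma card_path_min_tds: "card (path_min_tds k j) = 2*k+2"
proof (rule antisym)
  define g where "g w = (if w mod 4 = 3 \<and> j \<le> w div 4 then w - 2 else w)" for w :: nat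
  have "path_min_tds k j \<subseteq> g ` path_packing k"
  proof
    fix v assume v: "v \<in> path_min_tds k j"
    show "v \<in> g ` path_packing k"
    proof (cases v rule: mod4_cases)
      case (1 q)
      then show ?thesis using v mem_path_min_tds(1) by blast
    next
      case (2 q)
      then have "v = g (4*q+3)" "4*q+3 \<in> path_packing k"
        using v unfolding 2 mem_path_min_tds by (auto simp: g_def path_packing_def mod_Suc div_Suc)
      then show ?thesis by blast
    next
      case (3 q)
      then have "v = g v" "v \<in> path_packing k"
        using v unfolding 3 mem_path_min_tds by (auto simp: g_def path_packing_def mod_Suc div_Suc)
      then show ?thesis by blast
    next
      case (4 q)
      then have "v = g v" "v \<in> path_packing k"
        using v unfolding 4 mem_path_min_tds by (auto simp: g_def path_packing_def mod_Suc div_Suc)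
      then show ?thesis by blast
    qed
  qed
  then have "card (path_min_tds k j) \<le> card (g ` path_packing k)"
    by (rule card_mono[rotated]) (simp add: path_packing_def)
  also have "\<dots> \<le> card (path_packing k)" by (rule card_image_le) (simp add: path_packing_def)
  finally show "card (path_min_tds k j) \<le> 2*k+2" by (simp only: card_path_packing)
  show "2*k+2 \<le> card (path_min_tds k j)"
    by (rule card_path_tds_ge[OF path_min_tds_total_dominating])
qed

context
  fixes k :: nat and D :: "nat set"
  assumes tds: "total_dominating_set (path_V (4*k+3)) path_E D"
    and card_min: "card D = 2*k+2"
begin

lemma min_tds_subset: "D \<subseteq> {1..4*k+3}"
  using tds unfolding total_dominating_set_def path_V_def by blast

lemma min_tds_unique_neighbour:
  assumes "w \<in> path_packing k" "u \<in> D" "u' \<in> D" "path_E w u" "path_E w u'"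
  shows "u = u'"
proof (rule unique_neighbour_if_open_packing_card_eq[OF _ open_packing_path_packing _ _ assms])
  show "finite D" using min_tds_subset finite_subset by blast
  show "\<forall>w\<in>path_packing k. \<exists>u\<in>D. path_E w u"
    using tds path_packing_subset unfolding total_dominating_set_def by blast
  show "card D = card (path_packing k)" by (simp add: card_min card_path_packing)
qed

lemma min_tds_mod2: "q \<le> k \<Longrightarrow> 4*q+2 \<in> D"
proof (induction q)
  case 0
  show ?case using path_tds_neighbour[OF tds, of 1] min_tds_subset by auto
next
  case (Suc q)
  have "4*q+3 \<in> path_packing k" using Suc.prems by (simp add: path_packing_def)
  then have "4*q+4 \<notin> D"
    using min_tds_unique_neighbour Suc by (fastforce simp: path_E_def)
  then show ?case
    using path_tds_neighbour[OF tds, of "4*q+5"] Suc.prems by (auto simp: add.commute)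
qed

lemma min_tds_mod0: "4*q \<notin> D"
proof
  assume "4*q \<in> D"
  then have q: "1 \<le> q" "q \<le> k" using min_tds_subset by auto
  have "4*(q-1)+3 \<in> path_packing k" using q by (simp add: path_packing_def)
  moreover have "4*(q-1)+2 \<in> D" using min_tds_mod2 q by simp
  ultimately show False
    using min_tds_unique_neighbour \<open>4*q \<in> D\<close> q unfolding path_E_def by fastforce
qed

lemma min_tds_mod1_iff: "q \<le> k \<Longrightarrow> 4*q+1 \<in> D \<longleftrightarrow> 4*q+3 \<notin> D"
proof -
  assume q: "q \<le> k"
  then have "4*q+2 \<in> path_packing k" by (simp add: path_packing_def mod_Suc)
  then have "\<not> (4*q+1 \<in> D \<and> 4*q+3 \<in> D)"
    using min_tds_unique_neighbour unfolding path_E_def by fastforce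
  moreover have "4*q+1 \<in> D \<or> 4*q+3 \<in> D"
    using path_tds_neighbour[OF tds, of "4*q+2"] q by (auto simp: numeral_3_eq_3)
  ultimately show ?thesis by blast
qed

lemma min_tds_mod3_downward: "4*Suc q+3 \<in> D \<Longrightarrow> 4*q+3 \<in> D"
proof -
  assume "4*Suc q+3 \<in> D"
  then have "Suc q \<le> k" using min_tds_subset by auto
  then have "4*q+5 \<notin> D"
    using min_tds_mod1_iff[of "Suc q"] \<open>4*Suc q+3 \<in> D\<close> by (simp add: add.commute)
  then show ?thesis
    using path_tds_neighbour[OF tds, of "4*q+4"] \<open>Suc q \<le> k\<close> by (auto simp: add.commute)
qed

lemma min_tds_eq_path_min_tds: "\<exists>j\<le>k+1. D = path_min_tds k j"
proof -
  have "4*Suc k+3 \<notin> D" using min_tds_subset by auto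
  then obtain j where j: "j \<le> Suc k" "\<And>q. 4*q+3 \<in> D \<longleftrightarrow> q < j"
    using min_tds_mod3_downward downward_closed_nat_initial_segment[of "\<lambda>q. 4*q+3 \<in> D"]
    by blast
  have "v \<in> D \<longleftrightarrow> v \<in> path_min_tds k j" for v
  proof (cases "v \<le> 4*k+3")
    case True
    then show ?thesis
    proof (cases v rule: mod4_cases)
      case (1 q)
      then show ?thesis using min_tds_mod0 mem_path_min_tds(1) by simp
    next
      case (2 q)
      then have "q \<le> k" using True by simp
      then show ?thesis unfolding 2 mem_path_min_tds min_tds_mod1_iff[OF \<open>q \<le> k\<close>] j by auto
    next
      case (3 q)
      then have "q \<le> k" using True by simp
      then show ?thesis unfolding 3 mem_path_min_tds using min_tds_mod2 by simp
    next
      case (4 q)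
      then have "q \<le> k" using True by simp
      then show ?thesis unfolding 4 mem_path_min_tds j by simp
    qed
  next
    case False
    then show ?thesis using min_tds_subset unfolding path_min_tds_def path_V_def by auto
  qed
  with j(1) show ?thesis by auto
qed

end

lemma inj_on_path_min_tds: "inj_on (path_min_tds k) {..k+1}"
proof -
  have "path_min_tds k i \<noteq> path_min_tds k j" if "i < j" "j \<le> k+1" for i j
    using that mem_path_min_tds(4)[of i k] by auto
  then show ?thesis unfolding inj_on_def by (metis atMost_iff linorder_neqE_nat)
qed

lemma gamma_t_sets_path: "gamma_t_sets (path_V (4*k+3)) path_E = path_min_tds k ` {..k+1}"
proof -
  have "gamma_t_sets (path_V (4*k+3)) path_E
      = {D. total_dominating_set (path_V (4*k+3)) path_E D \<and> card D = 2*k+2}"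
    using path_min_tds_total_dominating card_path_min_tds card_path_tds_ge
    by (intro gamma_t_sets_eqI) (auto simp: path_V_def)
  then show ?thesis
    using min_tds_eq_path_min_tds path_min_tds_total_dominating card_path_min_tds
    by (force simp: image_iff)
qed

lemma card_path_min_tds_containing:
  assumes "v \<in> path_V (4*k+3)"
  shows "card {j \<in> {..k+1}. v \<in> path_min_tds k j} =
    (if v mod 4 = 0 then 0
     else if v mod 4 = 1 then v div 4 + 1
     else if v mod 4 = 2 then k + 2
     else k + 1 - v div 4)"
proof -
  have "v \<le> 4*k+3" using assms by (simp add: path_V_def)
  then show ?thesis
  proof (cases v rule: mod4_cases)
    case (1 q)
    then show ?thesis using mem_path_min_tds(1) by simp
  next
    case (2 q)
    then have "{j \<in> {..k+1}. v \<in> path_min_tds k j} = {..q}" "q \<le> k"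
      using \<open>v \<le> 4*k+3\<close> unfolding 2 mem_path_min_tds by auto
    then show ?thesis unfolding 2 by simp
  next
    case (3 q)
    then have "{j \<in> {..k+1}. v \<in> path_min_tds k j} = {..k+1}"
      using \<open>v \<le> 4*k+3\<close> unfolding 3 mem_path_min_tds by auto
    then show ?thesis unfolding 3 by (simp add: mod_Suc)
  next
    case (4 q)
    then have "{j \<in> {..k+1}. v \<in> path_min_tds k j} = {q<..k+1}" "q \<le> k"
      using \<open>v \<le> 4*k+3\<close> unfolding 4 mem_path_min_tds by auto
    then show ?thesis unfolding 4 by simp
  qed
qed

lemma TDV_path: "TDV (path_V (4*k+3)) path_E v = card {j \<in> {..k+1}. v \<in> path_min_tds k j}"
proof -
  have "TDV (path_V (4*k+3)) path_E v
      = card (path_min_tds k ` {j \<in> {..k+1}. v \<in> path_min_tds k j})"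
    unfolding TDV_def gamma_t_sets_path by (rule arg_cong[where f = card]) auto
  also have "\<dots> = card {j \<in> {..k+1}. v \<in> path_min_tds k j}"
    by (rule card_image[OF inj_on_subset[OF inj_on_path_min_tds]]) auto
  finally show ?thesis .
qed

theorem proposition5p5:
  fixes k :: nat
  shows "tau (path_V (4*k+3)) path_E = k + 2 \<and>
    (\<forall>v \<in> path_V (4*k+3).
       TDV (path_V (4*k+3)) path_E v =
         (if v mod 4 = 0 then 0
          else if v mod 4 = 1 then v div 4 + 1
          else if v mod 4 = 2 then k + 2
          else k + 1 - v div 4))"
proof -
  have "tau (path_V (4*k+3)) path_E = card (path_min_tds k ` {..k+1})"
    unfolding tau_def gamma_t_sets_path ..
  also have "\<dots> = k + 2" unfolding card_image[OF inj_on_path_min_tds] by simp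
  finally show ?thesis using TDV_path card_path_min_tds_containing by simp
qed

end
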